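(* Let $\Omega_1,\Omega_2\subset\mathbb{R}^n$ be nearly convex sets and $\varepsilon\geq 0$. If $\mathrm{ri}\,\Omega_1\cap\mathrm{ri}\,\Omega_2\neq \emptyset$, then for each $\bar x\in \Omega_1\cap\Omega_2$, $$N_\varepsilon(\bar x; \Omega_1\cap\Omega_2)=\bigcup_{\substack{\varepsilon_1\geq 0,\ \varepsilon_2\geq 0,\\ \varepsilon_1+\varepsilon_2=\varepsilon}}\big[N_{\varepsilon_1} (\bar x; \Omega_1)+N_{\varepsilon_2} (\bar x; \Omega_2)\big].$$
   Context: A set $D$ is nearly convex if there is a convex $E$ with $E\subset D\subset\overline{E}$. $\mathrm{ri}\,D=\{a\in D\mid\exists\delta>0,\ B(a;\delta)\cap\mathrm{aff}\,D\subset D\}$. For nonempty $\Omega\subset\mathbb{R}^n$, $\bar x\in\Omega$ and $\varepsilon\ge0$, the $\varepsilon$-normal set is $N_\varepsilon(\bar x;\Omega)=\{\xi\in\mathbb{R}^n\mid\langle\xi,x-\bar x\rangle\le\varepsilon\ \forall x\in\Omega\}$. Sums of sets are Minkowski sums. *)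

theory Defs
  imports "HOL-Analysis.Analysis"
begin

definition nearly_convex :: "'a::euclidean_space set \<Rightarrow> bool" where
  "nearly_convex D \<longleftrightarrow> (\<exists>E. convex E \<and> E \<subseteq> D \<and> D \<subseteq> closure E)"

definition eps_normal :: "real \<Rightarrow> 'a::euclidean_space \<Rightarrow> 'a set \<Rightarrow> 'a set" where
  "eps_normal \<epsilon> xbar \<Omega> = {\<xi>. \<forall>x\<in>\<Omega>. inner \<xi> (x - xbar) \<le> \<epsilon>}"

end

theory Submission
  imports Defs
begin

(* Both sides are unchanged when each nearly convex set is replaced by the closure of its convex
   core, and by the relative interior hypothesis the closure of the intersection of the cores is
   the intersection of the closures; so it suffices to treat convex sets C1, C2. There, if \<xi> is
   an \<epsilon>-normal to C1 \<inter> C2 at xbar, properly separating 0 from the convex set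
   {(x - y, \<xi>\<bullet>x - t) | x \<in> C1, y \<in> C2, t > \<xi>\<bullet>xbar + \<epsilon>} in the product space yields a
   splitting \<xi> = u + v with \<langle>u, x - xbar\<rangle> + \<langle>v, y - xbar\<rangle> \<le> \<epsilon> for all x \<in> C1, y \<in> C2;
   the vertical component of the separating vector cannot vanish since C1 and C2 share a
   relative interior point. Taking \<epsilon>1 as the supremum of \<langle>u, x - xbar\<rangle> over C1 splits \<epsilon>. *)

lemma eps_normal_antimono:
  assumes "S \<subseteq> T"
  shows "eps_normal \<epsilon> x T \<subseteq> eps_normal \<epsilon> x S"
  using assms unfolding eps_normal_def by blast

lemma eps_normal_closure: "eps_normal \<epsilon> x (closure S) = eps_normal \<epsilon> x S"
proof
  show "eps_normal \<epsilon> x (closure S) \<subseteq> eps_normal \<epsilon> x S"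
    by (rule eps_normal_antimono[OF closure_subset])
  show "eps_normal \<epsilon> x S \<subseteq> eps_normal \<epsilon> x (closure S)"
  proof
    fix \<xi>
    assume "\<xi> \<in> eps_normal \<epsilon> x S"
    then have "S \<subseteq> {y. \<xi> \<bullet> y \<le> \<epsilon> + \<xi> \<bullet> x}"
      by (auto simp: eps_normal_def inner_diff_right)
    then have "closure S \<subseteq> {y. \<xi> \<bullet> y \<le> \<epsilon> + \<xi> \<bullet> x}"
      by (intro closure_minimal closed_halfspace_le)
    then show "\<xi> \<in> eps_normal \<epsilon> x (closure S)"
      by (auto simp: eps_normal_def inner_diff_right)
  qed
qed

lemma eps_normal_eq_closure_core:
  assumes "E \<subseteq> \<Omega>" "\<Omega> \<subseteq> closure E"
  shows "eps_normal \<epsilon> x \<Omega> = eps_normal \<epsilon> x (closure E)"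
  using eps_normal_antimono[OF assms(1)] eps_normal_antimono[OF assms(2)] eps_normal_closure
  by blast

lemma rel_interior_eq_closure_core:
  fixes E :: "'a::euclidean_space set"
  assumes "convex E" "E \<subseteq> \<Omega>" "\<Omega> \<subseteq> closure E"
  shows "rel_interior \<Omega> = rel_interior (closure E)"
proof
  have "affine hull \<Omega> = affine hull (closure E)"
    by (metis assms(2,3) closure_same_affine_hull hull_mono subset_antisym)
  then show "rel_interior \<Omega> \<subseteq> rel_interior (closure E)"
    using rel_interior_mono assms(3) by blast
  have "rel_interior E \<subseteq> rel_interior \<Omega>"
    by (metis assms(2,3) closure_same_affine_hull hull_mono rel_interior_mono subset_antisym)
  then show "rel_interior (closure E) \<subseteq> rel_interior \<Omega>"
    using convex_rel_interior_closure[OF assms(1)] by simp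
qed

lemma eps_normal_Int_add:
  assumes "u \<in> eps_normal \<epsilon>1 x S" "v \<in> eps_normal \<epsilon>2 x T"
  shows "u + v \<in> eps_normal (\<epsilon>1 + \<epsilon>2) x (S \<inter> T)"
  using assms unfolding eps_normal_def by (auto simp: inner_add_left intro: add_mono)

lemma convex_proper_separation_0:
  fixes S :: "'a::euclidean_space set"
  assumes "convex S" "S \<noteq> {}" "0 \<notin> S"
  obtains a where "\<And>z. z \<in> S \<Longrightarrow> 0 \<le> a \<bullet> z" "\<exists>z\<in>S. 0 < a \<bullet> z"
proof (cases "0 \<in> closure S")
  case True
  have "0 \<notin> rel_interior S"
    using assms(3) rel_interior_subset by blast
  then obtain a where a: "\<And>y. y \<in> closure S \<Longrightarrow> 0 \<le> a \<bullet> y"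
      "\<And>y. y \<in> rel_interior S \<Longrightarrow> 0 < a \<bullet> y"
    using supporting_hyperplane_relative_frontier[OF assms(1) True] by (metis inner_zero_right)
  obtain z where "z \<in> rel_interior S"
    using rel_interior_eq_empty assms(1,2) by blast
  then show thesis
    using that a closure_subset rel_interior_subset by blast
next
  case False
  then obtain a b where "0 < b" "\<And>x. x \<in> closure S \<Longrightarrow> b < a \<bullet> x"
    using separating_hyperplane_closed_point[OF convex_closure[OF assms(1)] closed_closure]
    by (metis inner_zero_right)
  then show thesis
    using that assms(2) closure_subset by (meson ex_in_conv less_trans order_less_imp_le subsetD)
qed

lemma rel_interior_inner_min_imp_const:
  fixes S :: "'a::euclidean_space set"
  assumes "convex S" "z \<in> rel_interior S" "\<And>x. x \<in> S \<Longrightarrow> w \<bullet> z \<le> w \<bullet> x" "x \<in> S"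
  shows "w \<bullet> x = w \<bullet> z"
proof -
  obtain e where e: "e > 1" "(1 - e) *\<^sub>R x + e *\<^sub>R z \<in> S"
    using assms(1,2,4) convex_rel_interior_iff by blast
  have "w \<bullet> z \<le> (1 - e) * (w \<bullet> x) + e * (w \<bullet> z)"
    using assms(3)[OF e(2)] by (simp add: inner_add_right)
  then have "(e - 1) * (w \<bullet> x - w \<bullet> z) \<le> 0"
    by (simp add: algebra_simps)
  then have "w \<bullet> x \<le> w \<bullet> z"
    using e(1) by (simp add: mult_le_0_iff)
  then show ?thesis
    using assms(3)[OF assms(4)] by linarith
qed

lemma inner_le_on_Int_proper_separation:
  fixes C1 C2 :: "'a::euclidean_space set"
  assumes "convex C1" "convex C2" "C1 \<inter> C2 \<noteq> {}"
    and bound: "\<And>x. x \<in> C1 \<inter> C2 \<Longrightarrow> \<xi> \<bullet> x \<le> c"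
  obtains w \<gamma> where "\<And>x y t. x \<in> C1 \<Longrightarrow> y \<in> C2 \<Longrightarrow> c < t \<Longrightarrow> 0 \<le> w \<bullet> (x - y) + \<gamma> * (\<xi> \<bullet> x - t)"
    and "\<exists>x\<in>C1. \<exists>y\<in>C2. \<exists>t. 0 < w \<bullet> (x - y) + \<gamma> * (\<xi> \<bullet> x - t)"
proof -
  define f :: "'a \<times> 'a \<times> real \<Rightarrow> 'a \<times> real" where "f = (\<lambda>(x, y, t). (x - y, \<xi> \<bullet> x - t))"
  define S where "S = f ` (C1 \<times> C2 \<times> {c<..})"
  have "linear f"
    unfolding f_def by (auto simp: linear_iff inner_add_right algebra_simps)
  then have "convex S"
    unfolding S_def using assms(1,2) by (intro convex_linear_image convex_Times) auto
  moreover have "S \<noteq> {}"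
    unfolding S_def using assms(3) by (auto intro!: exI[of _ "c + 1"])
  moreover have "0 \<notin> S"
    unfolding S_def f_def using bound by (force simp: zero_prod_def)
  ultimately obtain a where sep: "\<And>s. s \<in> S \<Longrightarrow> 0 \<le> a \<bullet> s" and strict: "\<exists>s\<in>S. 0 < a \<bullet> s"
    using convex_proper_separation_0 by blast
  obtain w \<gamma> where a: "a = (w, \<gamma>)"
    by (cases a)
  show thesis
  proof
    fix x y t
    assume "x \<in> C1" "y \<in> C2" "c < t"
    then have "f (x, y, t) \<in> S"
      unfolding S_def by (intro imageI) simp
    moreover have "f (x, y, t) = (x - y, \<xi> \<bullet> x - t)"
      unfolding f_def by simp
    ultimately have "(x - y, \<xi> \<bullet> x - t) \<in> S"
      by simp
    then have "0 \<le> a \<bullet> (x - y, \<xi> \<bullet> x - t)"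
      by (rule sep)
    then show "0 \<le> w \<bullet> (x - y) + \<gamma> * (\<xi> \<bullet> x - t)"
      by (simp add: a)
  next
    show "\<exists>x\<in>C1. \<exists>y\<in>C2. \<exists>t. 0 < w \<bullet> (x - y) + \<gamma> * (\<xi> \<bullet> x - t)"
      using strict a unfolding S_def f_def by auto
  qed
qed

lemma proper_separation_vertical_neg:
  fixes C1 C2 :: "'a::euclidean_space set"
  assumes "convex C1" "convex C2" "z \<in> rel_interior C1" "z \<in> rel_interior C2"
    and sep: "\<And>x y t. x \<in> C1 \<Longrightarrow> y \<in> C2 \<Longrightarrow> c < t \<Longrightarrow> 0 \<le> w \<bullet> (x - y) + \<gamma> * (\<xi> \<bullet> x - t)"
    and strict: "\<exists>x\<in>C1. \<exists>y\<in>C2. \<exists>t. 0 < w \<bullet> (x - y) + \<gamma> * (\<xi> \<bullet> x - t)"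
  shows "\<gamma> < 0"
proof -
  have zC: "z \<in> C1" "z \<in> C2"
    using assms(3,4) rel_interior_subset by blast+
  have "\<gamma> \<le> 0"
  proof -
    define t where "t = max c (\<xi> \<bullet> z) + 1"
    have "0 \<le> \<gamma> * (\<xi> \<bullet> z - t)"
      using sep[OF zC, of t] unfolding t_def by simp
    moreover have "\<xi> \<bullet> z - t < 0"
      unfolding t_def by simp
    ultimately show ?thesis
      by (simp add: zero_le_mult_iff)
  qed
  moreover have "\<gamma> \<noteq> 0"
  proof
    assume "\<gamma> = 0"
    then have sep0: "w \<bullet> y \<le> w \<bullet> x" if "x \<in> C1" "y \<in> C2" for x y
      using sep[OF that, of "c + 1"] by (simp add: inner_diff_right)
    obtain x1 y1 t1 where "x1 \<in> C1" "y1 \<in> C2" "0 < w \<bullet> (x1 - y1) + \<gamma> * (\<xi> \<bullet> x1 - t1)"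
      using strict by blast
    moreover have "w \<bullet> x1 = w \<bullet> z"
      by (rule rel_interior_inner_min_imp_const[OF assms(1,3) _ \<open>x1 \<in> C1\<close>])
        (simp add: sep0 zC(2))
    moreover have "(- w) \<bullet> y1 = (- w) \<bullet> z"
      by (rule rel_interior_inner_min_imp_const[OF assms(2,4) _ \<open>y1 \<in> C2\<close>])
        (simp add: sep0 zC(1))
    ultimately show False
      using \<open>\<gamma> = 0\<close> by (simp add: inner_diff_right)
  qed
  ultimately show ?thesis
    by simp
qed

lemma convex_Int_inner_le_decouple:
  fixes C1 C2 :: "'a::euclidean_space set"
  assumes "convex C1" "convex C2" "rel_interior C1 \<inter> rel_interior C2 \<noteq> {}"
    and "\<And>x. x \<in> C1 \<inter> C2 \<Longrightarrow> \<xi> \<bullet> x \<le> c"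
  obtains v where "\<And>x y. x \<in> C1 \<Longrightarrow> y \<in> C2 \<Longrightarrow> (\<xi> - v) \<bullet> x + v \<bullet> y \<le> c"
proof -
  obtain z where z: "z \<in> rel_interior C1" "z \<in> rel_interior C2"
    using assms(3) by blast
  then have "C1 \<inter> C2 \<noteq> {}"
    using rel_interior_subset by blast
  then obtain w \<gamma> where sep: "\<And>x y t. x \<in> C1 \<Longrightarrow> y \<in> C2 \<Longrightarrow> c < t \<Longrightarrow> 0 \<le> w \<bullet> (x - y) + \<gamma> * (\<xi> \<bullet> x - t)"
    and strict: "\<exists>x\<in>C1. \<exists>y\<in>C2. \<exists>t. 0 < w \<bullet> (x - y) + \<gamma> * (\<xi> \<bullet> x - t)"
    using inner_le_on_Int_proper_separation[OF assms(1,2) _ assms(4)] by metis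
  have "\<gamma> < 0"
    using proper_separation_vertical_neg[OF assms(1,2) z sep strict] .
  define v where "v = (- 1 / \<gamma>) *\<^sub>R w"
  have "(\<xi> - v) \<bullet> x + v \<bullet> y \<le> c" if "x \<in> C1" "y \<in> C2" for x y
  proof -
    have "\<xi> \<bullet> x - v \<bullet> (x - y) \<le> c"
    proof (rule dense_ge)
      fix t
      assume "c < t"
      show "\<xi> \<bullet> x - v \<bullet> (x - y) \<le> t"
        using sep[OF \<open>x \<in> C1\<close> \<open>y \<in> C2\<close> \<open>c < t\<close>] \<open>\<gamma> < 0\<close>
        unfolding v_def by (simp add: field_simps)
    qed
    then show ?thesis
      by (simp add: inner_diff_left inner_diff_right)
  qed
  then show thesis
    using that by blast
qed

lemma sum_bound_split:
  fixes f :: "'a \<Rightarrow> real" and g :: "'b \<Rightarrow> real"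
  assumes "A \<noteq> {}" "B \<noteq> {}" "\<And>x y. x \<in> A \<Longrightarrow> y \<in> B \<Longrightarrow> f x + g y \<le> c"
  obtains c1 where "\<And>x. x \<in> A \<Longrightarrow> f x \<le> c1" "\<And>y. y \<in> B \<Longrightarrow> g y \<le> c - c1"
proof
  obtain y0 where "y0 \<in> B"
    using assms(2) by blast
  then have "bdd_above (f ` A)"
    using assms(3) by (intro bdd_aboveI[of _ "c - g y0"]) force
  then show "f x \<le> Sup (f ` A)" if "x \<in> A" for x
    using that by (simp add: cSup_upper)
  show "g y \<le> c - Sup (f ` A)" if "y \<in> B" for y
  proof -
    have "Sup (f ` A) \<le> c - g y"
      using assms(1,3) that by (intro cSup_least) (auto simp: algebra_simps)
    then show ?thesis
      by simp
  qed
qed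

lemma eps_normal_Int_convex:
  fixes C1 C2 :: "'a::euclidean_space set"
  assumes "convex C1" "convex C2" "rel_interior C1 \<inter> rel_interior C2 \<noteq> {}"
    and "xbar \<in> C1 \<inter> C2"
  shows "eps_normal \<epsilon> xbar (C1 \<inter> C2) =
    (\<Union>(\<epsilon>1, \<epsilon>2) \<in> {(a, b). a \<ge> 0 \<and> b \<ge> 0 \<and> a + b = \<epsilon>}.
        {u + v | u v. u \<in> eps_normal \<epsilon>1 xbar C1 \<and> v \<in> eps_normal \<epsilon>2 xbar C2})"
    (is "_ = ?sums")
proof
  show "?sums \<subseteq> eps_normal \<epsilon> xbar (C1 \<inter> C2)"
    using eps_normal_Int_add by fastforce
  show "eps_normal \<epsilon> xbar (C1 \<inter> C2) \<subseteq> ?sums"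
  proof
    fix \<xi>
    assume "\<xi> \<in> eps_normal \<epsilon> xbar (C1 \<inter> C2)"
    then have normal: "\<xi> \<bullet> (x - xbar) \<le> \<epsilon>" if "x \<in> C1 \<inter> C2" for x
      using that unfolding eps_normal_def by blast
    have "\<xi> \<bullet> x \<le> \<epsilon> + \<xi> \<bullet> xbar" if "x \<in> C1 \<inter> C2" for x
      using normal[OF that] by (simp add: inner_diff_right)
    then obtain v where v: "\<And>x y. x \<in> C1 \<Longrightarrow> y \<in> C2 \<Longrightarrow> (\<xi> - v) \<bullet> x + v \<bullet> y \<le> \<epsilon> + \<xi> \<bullet> xbar"
      using convex_Int_inner_le_decouple[OF assms(1-3)] by metis
    define u where "u = \<xi> - v"
    have "u \<bullet> (x - xbar) + v \<bullet> (y - xbar) \<le> \<epsilon>" if "x \<in> C1" "y \<in> C2" for x y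
      using v[OF that] unfolding u_def by (simp add: inner_diff_left inner_diff_right)
    then obtain \<epsilon>1 where \<epsilon>1: "\<And>x. x \<in> C1 \<Longrightarrow> u \<bullet> (x - xbar) \<le> \<epsilon>1"
        "\<And>y. y \<in> C2 \<Longrightarrow> v \<bullet> (y - xbar) \<le> \<epsilon> - \<epsilon>1"
      using sum_bound_split[of C1 C2 "\<lambda>x. u \<bullet> (x - xbar)" "\<lambda>y. v \<bullet> (y - xbar)" \<epsilon>] assms(4)
      by blast
    have "0 \<le> \<epsilon>1" "0 \<le> \<epsilon> - \<epsilon>1"
      using \<epsilon>1[of xbar] assms(4) by auto
    moreover have "u \<in> eps_normal \<epsilon>1 xbar C1" "v \<in> eps_normal (\<epsilon> - \<epsilon>1) xbar C2"
      using \<epsilon>1 unfolding eps_normal_def by blast+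
    moreover have "\<xi> = u + v"
      unfolding u_def by simp
    ultimately show "\<xi> \<in> ?sums"
      by (intro UN_I[of "(\<epsilon>1, \<epsilon> - \<epsilon>1)"]) auto
  qed
qed

theorem mainTheorem5:
  fixes \<Omega>1 \<Omega>2 :: "(real ^ 'n) set" and \<epsilon> :: real and xbar :: "real ^ 'n"
  assumes "nearly_convex \<Omega>1" and "nearly_convex \<Omega>2" and "\<epsilon> \<ge> 0"
    and "rel_interior \<Omega>1 \<inter> rel_interior \<Omega>2 \<noteq> {}"
    and "xbar \<in> \<Omega>1 \<inter> \<Omega>2"
  shows "eps_normal \<epsilon> xbar (\<Omega>1 \<inter> \<Omega>2) =
    (\<Union>(\<epsilon>1, \<epsilon>2) \<in> {(a, b). a \<ge> 0 \<and> b \<ge> 0 \<and> a + b = \<epsilon>}.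
        {u + v | u v. u \<in> eps_normal \<epsilon>1 xbar \<Omega>1 \<and> v \<in> eps_normal \<epsilon>2 xbar \<Omega>2})"
proof -
  obtain E1 E2 where E1: "convex E1" "E1 \<subseteq> \<Omega>1" "\<Omega>1 \<subseteq> closure E1"
    and E2: "convex E2" "E2 \<subseteq> \<Omega>2" "\<Omega>2 \<subseteq> closure E2"
    using assms(1,2) unfolding nearly_convex_def by blast
  have ri: "rel_interior (closure E1) \<inter> rel_interior (closure E2) \<noteq> {}"
    using assms(4) rel_interior_eq_closure_core[OF E1] rel_interior_eq_closure_core[OF E2] by simp
  have closure_Int: "closure (E1 \<inter> E2) = closure E1 \<inter> closure E2"
    using closure_Int_convex[OF E1(1) E2(1)] ri
    by (simp add: convex_rel_interior_closure[OF E1(1)] convex_rel_interior_closure[OF E2(1)])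
  have "E1 \<inter> E2 \<subseteq> \<Omega>1 \<inter> \<Omega>2" "\<Omega>1 \<inter> \<Omega>2 \<subseteq> closure (E1 \<inter> E2)"
    using E1 E2 closure_Int by auto
  then have "eps_normal \<epsilon> xbar (\<Omega>1 \<inter> \<Omega>2) = eps_normal \<epsilon> xbar (closure E1 \<inter> closure E2)"
    unfolding closure_Int[symmetric] by (rule eps_normal_eq_closure_core)
  moreover have "xbar \<in> closure E1 \<inter> closure E2"
    using assms(5) E1(3) E2(3) by blast
  ultimately show ?thesis
    unfolding eps_normal_eq_closure_core[OF E1(2,3)] eps_normal_eq_closure_core[OF E2(2,3)]
    using eps_normal_Int_convex[OF convex_closure[OF E1(1)] convex_closure[OF E2(1)] ri] by simp
qed

end
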